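(* For any $t,x$, one has $(\mathbb L_y-\mathbb L_z)\dfrac{1}{\sqrt{f_t(x,y,z)}}=0$ (for any local branch of the square root, where $f_t(x,y,z)\neq0$).
   Context: Here $t,x,y,z$ are complex variables, $f_t(x,y,z)=(t+xy-zx-zy)^2-4(z-t)(z-1)xy$, and $\mathbb L_y=\partial_y\,y(y-1)(y-t)\,\partial_y+y$ is the Lamé operator in the variable $y$ (and similarly $\mathbb L_z$ in $z$). *)

theory Defs
  imports "HOL-Complex_Analysis.Complex_Analysis"
begin

definition ft :: "complex \<Rightarrow> complex \<Rightarrow> complex \<Rightarrow> complex \<Rightarrow> complex" where
  "ft t x y z = (t + x*y - z*x - z*y)^2 - 4*(z-t)*(z-1)*x*y"

definition lame_y :: "complex \<Rightarrow> (complex \<Rightarrow> complex \<Rightarrow> complex) \<Rightarrow> complex \<Rightarrow> complex \<Rightarrow> complex" where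
  "lame_y t F y z = deriv (\<lambda>w. w*(w-1)*(w-t) * deriv (\<lambda>v. F v z) w) y + y * F y z"

definition lame_z :: "complex \<Rightarrow> (complex \<Rightarrow> complex \<Rightarrow> complex) \<Rightarrow> complex \<Rightarrow> complex \<Rightarrow> complex" where
  "lame_z t F y z = deriv (\<lambda>w. w*(w-1)*(w-t) * deriv (\<lambda>v. F y v) w) z + z * F y z"

end

theory Submission
  imports Defs
begin

text \<open>On each coordinate line a continuous square root h of the nonvanishing f is
  holomorphic with h' = f'/(2h). Hence, writing P(w) = w(w-1)(w-t) for the Lame coefficient,
  the Lame operator acts on 1/h as L(1/h) = N/(4 f^2 h), where the numerator
  N = 3 P f'^2 - 2 f (P' f' + P f'') + 4 w f^2 is built from f alone.
  For f = f_t the numerator computed in the variable y coincides with the one computed in z,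
  a polynomial identity.\<close>

lemma has_field_derivative_sqrt_branch:
  fixes h p :: "'a::real_normed_field \<Rightarrow> 'a"
  assumes S: "open S" and h_cont: "continuous_on S h" and sq: "\<And>w. w \<in> S \<Longrightarrow> h w ^ 2 = p w"
    and h_nz: "h w0 \<noteq> 0" and p: "(p has_field_derivative p') (at w0)" and w0: "w0 \<in> S"
  shows "(h has_field_derivative p' / (2 * h w0)) (at w0)"
proof -
  have "(h \<longlongrightarrow> h w0) (at w0)"
    using S h_cont w0 by (meson continuous_on_eq_continuous_at isContD)
  then have sum_lim: "((\<lambda>v. h v + h w0) \<longlongrightarrow> 2 * h w0) (at w0)"
    by (auto intro: tendsto_eq_intros)
  have quot_lim: "((\<lambda>v. ((p v - p w0) / (v - w0)) / (h v + h w0)) \<longlongrightarrow> p' / (2 * h w0)) (at w0)"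
    using h_nz p sum_lim by (intro tendsto_divide) (simp_all add: has_field_derivative_iff)
  have "\<forall>\<^sub>F v in at w0. h v + h w0 \<noteq> 0"
    using tendsto_imp_eventually_ne[OF sum_lim] h_nz by simp
  moreover have "\<forall>\<^sub>F v in at w0. v \<in> S"
    using S w0 by (rule eventually_at_in_open')
  ultimately have "\<forall>\<^sub>F v in at w0. ((p v - p w0) / (v - w0)) / (h v + h w0) = (h v - h w0) / (v - w0)"
  proof eventually_elim
    case (elim v)
    have "p v - p w0 = (h v - h w0) * (h v + h w0)"
      using sq[OF elim(2)] sq[OF w0] by (simp add: power2_eq_square algebra_simps)
    with elim(1) show ?case by simp
  qed
  from Lim_transform_eventually[OF quot_lim this] show ?thesis by (simp add: has_field_derivative_iff)
qed

definition lame_numerator :: "'a::field \<Rightarrow> 'a \<Rightarrow> 'a \<Rightarrow> 'a \<Rightarrow> 'a \<Rightarrow> 'a" where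
  "lame_numerator t w p p1 p2 =
     3*w*(w-1)*(w-t)*p1^2 - 2*p*((3*w^2 - 2*(1+t)*w + t)*p1 + w*(w-1)*(w-t)*p2) + 4*w*p^2"

lemma lame_inverse_sqrt_branch:
  fixes h p p1 p2 :: "'a::real_normed_field \<Rightarrow> 'a"
  assumes S: "open S" and h_cont: "continuous_on S h" and sq: "\<And>w. w \<in> S \<Longrightarrow> h w ^ 2 = p w"
    and nz: "\<And>w. w \<in> S \<Longrightarrow> p w \<noteq> 0"
    and p1: "\<And>w. w \<in> S \<Longrightarrow> (p has_field_derivative p1 w) (at w)"
    and p2: "\<And>w. w \<in> S \<Longrightarrow> (p1 has_field_derivative p2 w) (at w)"
    and y: "y \<in> S"
  shows "deriv (\<lambda>w. w*(w-1)*(w-t) * deriv (\<lambda>v. 1 / h v) w) y + y * (1 / h y)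
    = lame_numerator t y (p y) (p1 y) (p2 y) / (4 * p y ^ 2 * h y)"
proof -
  have h_nz: "h w \<noteq> 0" if "w \<in> S" for w
    using sq[OF that] nz[OF that] by auto
  have h: "(h has_field_derivative p1 w / (2 * h w)) (at w)" if "w \<in> S" for w
    using S h_cont sq h_nz[OF that] p1[OF that] that by (rule has_field_derivative_sqrt_branch)
  have "deriv (\<lambda>v. 1 / h v) w = - p1 w / (2 * p w * h w)" if "w \<in> S" for w
  proof (rule DERIV_imp_deriv)
    show "((\<lambda>v. 1 / h v) has_field_derivative - p1 w / (2 * p w * h w)) (at w)"
      using h[OF that] h_nz[OF that] sq[OF that, symmetric]
      by (auto intro!: derivative_eq_intros simp: power2_eq_square field_simps)
  qed
  then have "\<forall>\<^sub>F w in nhds y. w*(w-1)*(w-t) * deriv (\<lambda>v. 1 / h v) w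
      = w*(w-1)*(w-t) * (- p1 w / (2 * p w * h w))"
    using eventually_nhds_in_open[OF S y] by (auto elim: eventually_mono)
  then have "deriv (\<lambda>w. w*(w-1)*(w-t) * deriv (\<lambda>v. 1 / h v) w) y
      = deriv (\<lambda>w. w*(w-1)*(w-t) * (- p1 w / (2 * p w * h w))) y"
    by (rule deriv_cong_ev) simp
  also have "\<dots> = (3*y^2 - 2*(1+t)*y + t) * (- p1 y / (2 * p y * h y))
      + y*(y-1)*(y-t) * ((p1 y)^2 * 3 - 2 * p y * p2 y) / (4 * p y ^ 2 * h y)"
    using h[OF y] p1[OF y] p2[OF y] h_nz[OF y] nz[OF y]
      sq[OF y, symmetric]
    by (intro DERIV_imp_deriv) (auto intro!: derivative_eq_intros simp: power2_eq_square field_simps)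
  finally have deriv_eq: "deriv (\<lambda>w. w*(w-1)*(w-t) * deriv (\<lambda>v. 1 / h v) w) y = \<dots>" .
  show ?thesis
    unfolding deriv_eq lame_numerator_def using h_nz[OF y] sq[OF y, symmetric]
    by (simp add: power2_eq_square field_simps)
qed

definition ft_dy :: "complex \<Rightarrow> complex \<Rightarrow> complex \<Rightarrow> complex \<Rightarrow> complex" where
  "ft_dy t x y z = 2*(t + x*y - z*x - z*y)*(x - z) - 4*(z-t)*(z-1)*x"

definition ft_dz :: "complex \<Rightarrow> complex \<Rightarrow> complex \<Rightarrow> complex \<Rightarrow> complex" where
  "ft_dz t x y z = - 2*(t + x*y - z*x - z*y)*(x + y) - 4*(2*z - 1 - t)*x*y"

lemma has_field_derivative_ft_y: "((\<lambda>v. ft t x v z) has_field_derivative ft_dy t x y z) (at y)"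
  unfolding ft_def ft_dy_def
  by (auto intro!: derivative_eq_intros simp: algebra_simps power2_eq_square)

lemma has_field_derivative_ft_dy: "((\<lambda>v. ft_dy t x v z) has_field_derivative 2*(x-z)^2) (at y)"
  unfolding ft_dy_def
  by (auto intro!: derivative_eq_intros simp: algebra_simps power2_eq_square)

lemma has_field_derivative_ft_z: "((\<lambda>v. ft t x y v) has_field_derivative ft_dz t x y z) (at z)"
  unfolding ft_def ft_dz_def
  by (auto intro!: derivative_eq_intros simp: algebra_simps power2_eq_square)

lemma has_field_derivative_ft_dz: "((\<lambda>v. ft_dz t x y v) has_field_derivative 2*(x-y)^2) (at z)"
  unfolding ft_dz_def
  by (auto intro!: derivative_eq_intros simp: algebra_simps power2_eq_square)

lemma lame_numerator_ft_y_eq_z: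
  "lame_numerator t y (ft t x y z) (ft_dy t x y z) (2*(x-z)^2)
     = lame_numerator t z (ft t x y z) (ft_dz t x y z) (2*(x-y)^2)"
  unfolding lame_numerator_def ft_def ft_dy_def ft_dz_def by algebra

lemma lame_y_inverse_sqrt_ft:
  fixes g :: "complex \<times> complex \<Rightarrow> complex"
  assumes "open U" and "\<And>y z. (y, z) \<in> U \<Longrightarrow> ft t x y z \<noteq> 0" and "continuous_on U g"
    and "\<And>y z. (y, z) \<in> U \<Longrightarrow> (g (y, z))^2 = ft t x y z" and "(y, z) \<in> U"
  shows "lame_y t (\<lambda>a b. 1 / g (a, b)) y z
    = lame_numerator t y (ft t x y z) (ft_dy t x y z) (2*(x-z)^2) / (4 * ft t x y z ^ 2 * g (y, z))"
  unfolding lame_y_def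
proof (rule lame_inverse_sqrt_branch)
  show "open ((\<lambda>v. (v, z)) -` U)"
    using assms(1) by (intro open_vimage continuous_intros)
  show "continuous_on ((\<lambda>v. (v, z)) -` U) (\<lambda>v. g (v, z))"
    using assms(3) by (auto intro!: continuous_on_compose2[of U g] continuous_intros)
qed (use assms(2,4,5) has_field_derivative_ft_y has_field_derivative_ft_dy in auto)

lemma lame_z_inverse_sqrt_ft:
  fixes g :: "complex \<times> complex \<Rightarrow> complex"
  assumes "open U" and "\<And>y z. (y, z) \<in> U \<Longrightarrow> ft t x y z \<noteq> 0" and "continuous_on U g"
    and "\<And>y z. (y, z) \<in> U \<Longrightarrow> (g (y, z))^2 = ft t x y z" and "(y, z) \<in> U"
  shows "lame_z t (\<lambda>a b. 1 / g (a, b)) y z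
    = lame_numerator t z (ft t x y z) (ft_dz t x y z) (2*(x-y)^2) / (4 * ft t x y z ^ 2 * g (y, z))"
  unfolding lame_z_def
proof (rule lame_inverse_sqrt_branch)
  show "open ((\<lambda>v. (y, v)) -` U)"
    using assms(1) by (intro open_vimage continuous_intros)
  show "continuous_on ((\<lambda>v. (y, v)) -` U) (\<lambda>v. g (y, v))"
    using assms(3) by (auto intro!: continuous_on_compose2[of U g] continuous_intros)
qed (use assms(2,4,5) has_field_derivative_ft_z has_field_derivative_ft_dz in auto)

theorem proposition5p14:
  fixes t x :: complex and U :: "(complex \<times> complex) set" and g :: "complex \<times> complex \<Rightarrow> complex"
  assumes "open U"
    and "\<And>y z. (y, z) \<in> U \<Longrightarrow> ft t x y z \<noteq> 0"
    and "continuous_on U g"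
    and "\<And>y z. (y, z) \<in> U \<Longrightarrow> (g (y, z))^2 = ft t x y z"
    and "(y, z) \<in> U"
  shows "lame_y t (\<lambda>a b. 1 / g (a, b)) y z - lame_z t (\<lambda>a b. 1 / g (a, b)) y z = 0"
  using lame_y_inverse_sqrt_ft[OF assms] lame_z_inverse_sqrt_ft[OF assms]
  by (simp add: lame_numerator_ft_y_eq_z)

end
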